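(* The real Lie algebra $\mathfrak g=\mathfrak{sl}(2,\mathbb R)\ltimes\mathbb R^2$ admits no inner product with an orthonormal basis consisting of geodesic elements.
   Context: $\mathfrak{sl}(2,\mathbb R)\ltimes\mathbb R^2$ is the semidirect product in which $\mathfrak{sl}(2,\mathbb R)$ acts on the abelian ideal $\mathbb R^2$ by its canonical linear action; equivalently, it is the Lie algebra of real $3\times3$ matrices of trace zero whose third row is zero, with the commutator bracket. For an inner product $\langle\cdot,\cdot\rangle$ on a real Lie algebra $\mathfrak g$, a nonzero $X\in\mathfrak g$ is a geodesic element if $\langle X,[X,Y]\rangle=0$ for all $Y\in\mathfrak g$. *)

theory Defs
  imports "HOL-Analysis.Analysis"
begin

text \<open>The Lie algebra sl(2,R) semidirect R^2, realised as the real 3x3 matrices of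
trace zero whose third row is zero (rows indexed by 1, 2, 3 :: 3), with the
commutator bracket.\<close>

definition slR2 :: "(real^3^3) set" where
  "slR2 = {A. trace A = 0 \<and> A $ 3 = 0}"

definition lie_bracket :: "real^3^3 \<Rightarrow> real^3^3 \<Rightarrow> real^3^3" where
  "lie_bracket X Y = X ** Y - Y ** X"

definition inner_product_on :: "'v::real_vector set \<Rightarrow> ('v \<Rightarrow> 'v \<Rightarrow> real) \<Rightarrow> bool" where
  "inner_product_on V ip \<longleftrightarrow>
     (\<forall>x\<in>V. \<forall>y\<in>V. ip x y = ip y x) \<and>
     (\<forall>x\<in>V. \<forall>y\<in>V. \<forall>z\<in>V. ip (x + y) z = ip x z + ip y z) \<and>
     (\<forall>a. \<forall>x\<in>V. \<forall>z\<in>V. ip (a *\<^sub>R x) z = a * ip x z) \<and>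
     (\<forall>x\<in>V. x \<noteq> 0 \<longrightarrow> ip x x > 0)"

definition geodesic_element ::
  "(real^3^3 \<Rightarrow> real^3^3 \<Rightarrow> real) \<Rightarrow> real^3^3 \<Rightarrow> bool" where
  "geodesic_element ip X \<longleftrightarrow> X \<in> slR2 \<and> X \<noteq> 0 \<and>
     (\<forall>Y\<in>slR2. ip X (lie_bracket X Y) = 0)"

definition orthonormal_basis ::
  "'v::real_vector set \<Rightarrow> ('v \<Rightarrow> 'v \<Rightarrow> real) \<Rightarrow> 'v set \<Rightarrow> bool" where
  "orthonormal_basis V ip B \<longleftrightarrow> B \<subseteq> V \<and> span B = V \<and>
     (\<forall>x\<in>B. \<forall>y\<in>B. ip x y = (if x = y then 1 else 0))"

end

theory Submission
  imports Defs
begin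

text \<open>Write an element as b = (M, v) with M \<in> sl(2,R), v \<in> R^2, and let \<open>\<ell>\<^sub>b = \<langle>b, (0, \<cdot>)\<rangle>\<close>.
For a geodesic unit vector b the conditions \<open>\<langle>b, [b, Y]\<rangle> = 0\<close> force \<open>\<ell>\<^sub>b M = 0\<close> and, when
\<open>\<ell>\<^sub>b \<noteq> 0\<close>, also \<open>\<ell>\<^sub>b(v) = 2/3\<close> and \<open>M \<noteq> 0\<close>. Expanding the translations \<open>e\<^sub>1, e\<^sub>2\<close> in an
orthonormal basis B of geodesic elements gives \<open>\<Sum>\<^sub>b \<ell>\<^sub>b(v\<^sub>b) = 2\<close>, so exactly three basis
vectors have \<open>\<ell>\<^sub>b \<noteq> 0\<close>. Over these three, the coefficient vectors of \<open>e\<^sub>1, e\<^sub>2\<close> in \<open>R^3\<close> are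
dual to those of v, while the entries of the sl(2)-parts are orthogonal to them, hence all
proportional to their cross product; then \<open>\<ell>\<^sub>b M\<^sub>b = 0\<close> forces some \<open>M\<^sub>b\<close> to vanish.\<close>

unbundle cross3_syntax

lemma inner_product_on_commute:
  "inner_product_on V ip \<Longrightarrow> x \<in> V \<Longrightarrow> y \<in> V \<Longrightarrow> ip x y = ip y x"
  unfolding inner_product_on_def by simp

lemma inner_product_on_add_right:
  assumes "inner_product_on V ip" "subspace V" "x \<in> V" "y \<in> V" "z \<in> V"
  shows "ip z (x + y) = ip z x + ip z y"
proof -
  have "ip z (x + y) = ip (x + y) z"
    using assms subspace_add inner_product_on_commute by metis
  also have "\<dots> = ip x z + ip y z"
    using assms unfolding inner_product_on_def by simp
  finally show ?thesis
    using assms inner_product_on_commute by metis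
qed

lemma inner_product_on_scaleR_right:
  assumes "inner_product_on V ip" "subspace V" "x \<in> V" "z \<in> V"
  shows "ip z (c *\<^sub>R x) = c * ip z x"
proof -
  have "ip z (c *\<^sub>R x) = ip (c *\<^sub>R x) z"
    using assms subspace_scale inner_product_on_commute by metis
  also have "\<dots> = c * ip x z"
    using assms unfolding inner_product_on_def by simp
  finally show ?thesis
    using assms inner_product_on_commute by metis
qed

lemma inner_product_on_sum_right:
  assumes "inner_product_on V ip" "subspace V" "z \<in> V" "finite t" "t \<subseteq> V"
  shows "ip z (\<Sum>w\<in>t. u w *\<^sub>R w) = (\<Sum>w\<in>t. u w * ip z w)"
  using assms(4,5)
proof (induction t rule: finite_induct)
  case empty
  show ?case
    using inner_product_on_scaleR_right[OF assms(1,2,3,3), of 0] by simp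
next
  case (insert v t)
  have "v \<in> V" "(\<Sum>w\<in>t. u w *\<^sub>R w) \<in> V"
    using insert.prems assms(2) by (auto intro: subspace_sum subspace_scale)
  then show ?case
    using insert inner_product_on_add_right[OF assms(1,2) subspace_scale[OF assms(2)] _ assms(3)]
      inner_product_on_scaleR_right[OF assms(1,2) _ assms(3)] by simp
qed

lemma orthonormal_sum_coeff:
  assumes ip: "inner_product_on V ip" and V: "subspace V" and "B \<subseteq> V"
    and orth: "\<forall>x\<in>B. \<forall>y\<in>B. ip x y = (if x = y then 1 else 0)"
    and t: "finite t" "t \<subseteq> B" and "v \<in> t"
  shows "ip v (\<Sum>w\<in>t. u w *\<^sub>R w) = u v"
proof -
  have "ip v (\<Sum>w\<in>t. u w *\<^sub>R w) = (\<Sum>w\<in>t. u w * ip v w)"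
    using assms by (intro inner_product_on_sum_right[OF ip V]) auto
  also have "\<dots> = (\<Sum>w\<in>t. if w = v then u w else 0)"
  proof (rule sum.cong)
    fix w assume "w \<in> t"
    then have "ip v w = (if v = w then 1 else 0)"
      using orth t(2) \<open>v \<in> t\<close> by blast
    then show "u w * ip v w = (if w = v then u w else 0)"
      by auto
  qed simp
  finally show ?thesis
    using t \<open>v \<in> t\<close> by simp
qed

lemma orthonormal_basis_expansion:
  fixes V :: "'v::euclidean_space set"
  assumes ip: "inner_product_on V ip" and V: "subspace V" and onb: "orthonormal_basis V ip B"
  shows "finite B" and "x \<in> V \<Longrightarrow> x = (\<Sum>b\<in>B. ip b x *\<^sub>R b)"
proof -
  have BV: "B \<subseteq> V" and span: "span B = V"
    and orth: "\<forall>x\<in>B. \<forall>y\<in>B. ip x y = (if x = y then 1 else 0)"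
    using onb unfolding orthonormal_basis_def by auto
  have "independent B"
    unfolding dependent_explicit
  proof clarify
    fix t u v assume t: "finite t" "t \<subseteq> B" "(\<Sum>w\<in>t. u w *\<^sub>R w) = 0" and "v \<in> t" "u v \<noteq> 0"
    have "u v = ip v 0"
      using orthonormal_sum_coeff[OF ip V BV orth t(1,2) \<open>v \<in> t\<close>, of u] t(3) by simp
    also have "\<dots> = 0"
      using inner_product_on_scaleR_right[OF ip V, where c=0 and x=v and z=v] \<open>v \<in> t\<close> t(2) BV by auto
    finally show False
      using \<open>u v \<noteq> 0\<close> by simp
  qed
  then show fin: "finite B"
    using independent_bound by blast
  assume "x \<in> V"
  then obtain u where x: "x = (\<Sum>b\<in>B. u b *\<^sub>R b)"
    using span span_finite[OF fin] by auto
  have "ip b x = u b" if "b \<in> B" for b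
    unfolding x using orthonormal_sum_coeff[OF ip V BV orth fin] that by simp
  then show "x = (\<Sum>b\<in>B. ip b x *\<^sub>R b)"
    using x by simp
qed

lemma orthogonal_to_both_parallel_cross:
  fixes z c d :: "real^3"
  assumes "c \<times> d \<noteq> 0" "c \<bullet> z = 0" "d \<bullet> z = 0"
  shows "\<exists>\<alpha>. z = \<alpha> *\<^sub>R (c \<times> d)"
proof -
  have "(c \<times> d) \<times> z = 0"
    using assms(2,3) by (simp add: cross_skew[of "c \<times> d"] Lagrange inner_commute)
  then show ?thesis
    using assms(1) by (auto simp: cross_eq_0 collinear_lemma)
qed

lemma sl2_coordinates_vanish_somewhere:
  fixes c d x y a p r :: "real^3"
  assumes dual: "c \<bullet> x = 1" "c \<bullet> y = 0" "d \<bullet> x = 0" "d \<bullet> y = 1"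
    and orth_c: "c \<bullet> a = 0" "c \<bullet> p = 0" "c \<bullet> r = 0"
    and orth_d: "d \<bullet> a = 0" "d \<bullet> p = 0" "d \<bullet> r = 0"
    and annihilate: "\<And>k. c$k * a$k + d$k * r$k = 0" "\<And>k. c$k * p$k - d$k * a$k = 0"
  shows "\<exists>k. a$k = 0 \<and> p$k = 0 \<and> r$k = 0"
proof (rule ccontr)
  assume nonzero: "\<nexists>k. a$k = 0 \<and> p$k = 0 \<and> r$k = 0"
  define w where "w = c \<times> d"
  have "w \<bullet> (x \<times> y) = 1"
    using dual by (simp add: w_def dot_cross)
  then have "w \<noteq> 0" by auto
  then obtain \<alpha> \<pi> \<rho> where a: "a = \<alpha> *\<^sub>R w" and p: "p = \<pi> *\<^sub>R w" and r: "r = \<rho> *\<^sub>R w"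
    using orthogonal_to_both_parallel_cross orth_c orth_d unfolding w_def by metis
  have w_nz: "w$k \<noteq> 0" for k
    using nonzero a p r by auto
  have "w$k * (\<alpha> * c$k + \<rho> * d$k) = 0" "w$k * (\<pi> * c$k - \<alpha> * d$k) = 0" for k
    using annihilate[of k] unfolding a p r by (simp_all add: algebra_simps)
  then have "\<alpha> *\<^sub>R c + \<rho> *\<^sub>R d = 0" "\<pi> *\<^sub>R c - \<alpha> *\<^sub>R d = 0"
    using w_nz by (simp_all add: vec_eq_iff)
  then have "(\<alpha> *\<^sub>R c + \<rho> *\<^sub>R d) \<bullet> x = 0" "(\<alpha> *\<^sub>R c + \<rho> *\<^sub>R d) \<bullet> y = 0"
    "(\<pi> *\<^sub>R c - \<alpha> *\<^sub>R d) \<bullet> x = 0"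
    by simp_all
  then have "\<alpha> = 0" "\<rho> = 0" "\<pi> = 0"
    using dual by (simp_all add: inner_add_left inner_diff_left)
  then show False
    using nonzero a p r by auto
qed

definition slR2_elem :: "real \<Rightarrow> real \<Rightarrow> real \<Rightarrow> real \<Rightarrow> real \<Rightarrow> real^3^3" where
  "slR2_elem a p r x y = vector [vector [a, p, x], vector [r, -a, y], 0]"

definition sl_H :: "real^3^3" where "sl_H = slR2_elem 1 0 0 0 0"
definition sl_E :: "real^3^3" where "sl_E = slR2_elem 0 1 0 0 0"
definition sl_F :: "real^3^3" where "sl_F = slR2_elem 0 0 1 0 0"
definition tr_e1 :: "real^3^3" where "tr_e1 = slR2_elem 0 0 0 1 0"
definition tr_e2 :: "real^3^3" where "tr_e2 = slR2_elem 0 0 0 0 1"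

lemma slR2_elem_nth [simp]:
  "slR2_elem a p r x y $ 1 = vector [a, p, x]"
  "slR2_elem a p r x y $ 2 = vector [r, -a, y]"
  "slR2_elem a p r x y $ 3 = 0"
  by (simp_all add: slR2_elem_def)

lemma slR2_iff_slR2_elem:
  "X \<in> slR2 \<longleftrightarrow> X = slR2_elem (X$1$1) (X$1$2) (X$2$1) (X$1$3) (X$2$3)"
  unfolding slR2_def trace_def by (auto simp: sum_3 vec_eq_iff forall_3 vector_3)

lemma slR2_elem_in_slR2 [simp]: "slR2_elem a p r x y \<in> slR2"
  by (subst slR2_iff_slR2_elem) (simp add: vector_3)

lemma slR2_elem_decompose:
  "slR2_elem a p r x y = a *\<^sub>R sl_H + p *\<^sub>R sl_E + r *\<^sub>R sl_F + x *\<^sub>R tr_e1 + y *\<^sub>R tr_e2"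
  by (simp add: sl_H_def sl_E_def sl_F_def tr_e1_def tr_e2_def vec_eq_iff forall_3 vector_3)

lemma subspace_slR2: "subspace slR2"
  unfolding subspace_def slR2_def trace_def by (simp add: sum.distrib sum_distrib_left[symmetric])

lemma lie_bracket_slR2_elem:
  "lie_bracket (slR2_elem a p r x y) (slR2_elem a' p' r' x' y') =
     slR2_elem (p * r' - r * p') (2 * (a * p' - p * a')) (2 * (r * a' - a * r'))
       (a * x' + p * y' - a' * x - p' * y) (r * x' - a * y' - r' * x + a' * y)"
  unfolding lie_bracket_def
  by (simp add: vec_eq_iff forall_3 vector_3 matrix_matrix_mult_def sum_3 algebra_simps)

lemma inner_product_on_slR2_elem_right:
  assumes ip: "inner_product_on slR2 ip" and z: "z \<in> slR2"
  shows "ip z (slR2_elem a p r x y) =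
    a * ip z sl_H + p * ip z sl_E + r * ip z sl_F + x * ip z tr_e1 + y * ip z tr_e2"
proof -
  have basis: "sl_H \<in> slR2" "sl_E \<in> slR2" "sl_F \<in> slR2" "tr_e1 \<in> slR2" "tr_e2 \<in> slR2"
    by (simp_all add: sl_H_def sl_E_def sl_F_def tr_e1_def tr_e2_def)
  note add = inner_product_on_add_right[OF ip subspace_slR2 _ _ z]
    and scale = inner_product_on_scaleR_right[OF ip subspace_slR2 _ z]
    and closed = subspace_add[OF subspace_slR2] subspace_scale[OF subspace_slR2]
  show ?thesis
    unfolding slR2_elem_decompose using basis by (simp add: add scale closed)
qed

lemma geodesic_unit_translation_functional:
  assumes ip: "inner_product_on slR2 ip" and geo: "geodesic_element ip b" and unit: "ip b b = 1"
    and nonzero: "ip b tr_e1 \<noteq> 0 \<or> ip b tr_e2 \<noteq> 0"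
  shows "ip b tr_e1 * b$1$3 + ip b tr_e2 * b$2$3 = 2/3"
    and "ip b tr_e1 * b$1$1 + ip b tr_e2 * b$2$1 = 0"
    and "ip b tr_e1 * b$1$2 - ip b tr_e2 * b$1$1 = 0"
    and "\<not> (b$1$1 = 0 \<and> b$1$2 = 0 \<and> b$2$1 = 0)"
proof -
  have b_in: "b \<in> slR2" and pairing: "\<And>Y. Y \<in> slR2 \<Longrightarrow> ip b (lie_bracket b Y) = 0"
    using geo unfolding geodesic_element_def by auto
  obtain a p r x y where b: "b = slR2_elem a p r x y"
    using b_in slR2_iff_slR2_elem by blast
  define g1 where "g1 = ip b sl_H"
  define g2 where "g2 = ip b sl_E"
  define g3 where "g3 = ip b sl_F"
  define c where "c = ip b tr_e1"
  define d where "d = ip b tr_e2"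
  note pair = inner_product_on_slR2_elem_right[OF ip b_in, unfolded b]
  have "ip b (lie_bracket b (slR2_elem 1 0 0 0 0)) = 0" "ip b (lie_bracket b (slR2_elem 0 1 0 0 0)) = 0"
    "ip b (lie_bracket b (slR2_elem 0 0 1 0 0)) = 0" "ip b (lie_bracket b (slR2_elem 0 0 0 1 0)) = 0"
    "ip b (lie_bracket b (slR2_elem 0 0 0 0 1)) = 0"
    by (simp_all add: pairing)
  then have e1: "-2*p*g2 + 2*r*g3 - x*c + y*d = 0"
    and e2: "-r*g1 + 2*a*g2 - y*c = 0"
    and e3: "p*g1 - 2*a*g3 - x*d = 0"
    and e4: "a*c + r*d = 0"
    and e5: "p*c - a*d = 0"
    unfolding g1_def g2_def g3_def c_def d_def
    by (simp_all add: b lie_bracket_slR2_elem pair)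
  have norm: "a*g1 + p*g2 + r*g3 + x*c + y*d = 1"
    using unit unfolding g1_def g2_def g3_def c_def d_def by (simp add: b pair)
  txt \<open>If \<open>(c, d) \<noteq> 0\<close>, then \<open>e4, e5\<close> make M nilpotent, and pairing with a semisimple
    \<open>N\<close> satisfying \<open>[N, M] = 2M\<close> gives \<open>\<langle>b, M\<rangle> = (cx + dy)/2\<close>; \<open>norm\<close> reads
    \<open>\<langle>b, M\<rangle> + (cx + dy) = 1\<close>.\<close>
  have "(c^2 + d^2) * (3 * (c*x + d*y) - 2) = 0"
    using e1 e2 e3 e4 e5 norm by algebra
  moreover have "c^2 + d^2 \<noteq> 0"
    using nonzero unfolding c_def d_def by (simp add: sum_power2_eq_zero_iff)
  ultimately have "3 * (c*x + d*y) - 2 = 0"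
    by (metis mult_eq_0_iff)
  then have translation: "c*x + d*y = 2/3"
    by simp
  then show "ip b tr_e1 * b$1$3 + ip b tr_e2 * b$2$3 = 2/3"
    unfolding c_def d_def by (simp add: b)
  show "ip b tr_e1 * b$1$1 + ip b tr_e2 * b$2$1 = 0"
    using e4 unfolding c_def d_def by (simp add: b mult.commute)
  show "ip b tr_e1 * b$1$2 - ip b tr_e2 * b$1$1 = 0"
    using e5 unfolding c_def d_def by (simp add: b mult.commute)
  show "\<not> (b$1$1 = 0 \<and> b$1$2 = 0 \<and> b$2$1 = 0)"
    using norm translation by (auto simp: b algebra_simps)
qed

lemma orthonormal_basis_entry_expansion:
  fixes V :: "(real^'n^'m) set"
  assumes ip: "inner_product_on V ip" and V: "subspace V" and onb: "orthonormal_basis V ip B"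
    and "Z \<in> V" and "S \<subseteq> B" and outside: "\<forall>b\<in>B - S. ip b Z = 0"
  shows "(\<Sum>b\<in>S. ip b Z * b$i$j) = Z$i$j"
proof -
  have "Z = (\<Sum>b\<in>B. ip b Z *\<^sub>R b)"
    using orthonormal_basis_expansion[OF ip V onb] \<open>Z \<in> V\<close> by blast
  also have "\<dots> = (\<Sum>b\<in>S. ip b Z *\<^sub>R b)"
    using orthonormal_basis_expansion(1)[OF ip V onb] \<open>S \<subseteq> B\<close> outside
    by (intro sum.mono_neutral_right) auto
  finally have "Z$i$j = (\<Sum>b\<in>S. ip b Z *\<^sub>R b)$i$j"
    by (rule arg_cong)
  then show ?thesis
    by (simp add: sum_component)
qed

lemma inner_vec_reindex_bij:
  fixes \<beta> :: "'n::finite \<Rightarrow> 'a"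
  assumes "bij_betw \<beta> UNIV S"
  shows "(\<chi> k. f (\<beta> k)) \<bullet> (\<chi> k. g (\<beta> k)) = (\<Sum>b\<in>S. f b * g b :: real)"
  unfolding inner_vec_def using sum.reindex_bij_betw[OF assms] by simp

lemma card_translation_support:
  assumes ip: "inner_product_on slR2 ip" and onb: "orthonormal_basis slR2 ip B"
    and geo: "\<forall>b\<in>B. geodesic_element ip b"
  shows "card {b\<in>B. ip b tr_e1 \<noteq> 0 \<or> ip b tr_e2 \<noteq> 0} = 3"
proof -
  define S where "S = {b\<in>B. ip b tr_e1 \<noteq> 0 \<or> ip b tr_e2 \<noteq> 0}"
  have "S \<subseteq> B" and outside: "\<forall>b\<in>B - S. ip b tr_e1 = 0 \<and> ip b tr_e2 = 0"
    unfolding S_def by auto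
  note expand = orthonormal_basis_entry_expansion[OF ip subspace_slR2 onb _ \<open>S \<subseteq> B\<close>]
  have "(\<Sum>b\<in>S. ip b tr_e1 * b$1$3 + ip b tr_e2 * b$2$3) = tr_e1$1$3 + tr_e2$2$3"
    using outside by (simp add: sum.distrib expand tr_e1_def tr_e2_def)
  also have "\<dots> = 2"
    by (simp add: tr_e1_def tr_e2_def)
  moreover have "(\<Sum>b\<in>S. ip b tr_e1 * b$1$3 + ip b tr_e2 * b$2$3) = (\<Sum>b\<in>S. 2/3)"
  proof (rule sum.cong)
    fix b assume "b \<in> S"
    then have "ip b b = 1"
      using onb \<open>S \<subseteq> B\<close> unfolding orthonormal_basis_def by auto
    then show "ip b tr_e1 * b$1$3 + ip b tr_e2 * b$2$3 = 2/3"
      using geodesic_unit_translation_functional(1)[OF ip] geo \<open>b \<in> S\<close> unfolding S_def by blast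
  qed simp
  ultimately show ?thesis
    unfolding S_def by simp
qed

theorem proposition8p2:
  shows "\<not> (\<exists>ip B. inner_product_on slR2 ip \<and> orthonormal_basis slR2 ip B \<and>
                (\<forall>X\<in>B. geodesic_element ip X))"
proof
  assume "\<exists>ip B. inner_product_on slR2 ip \<and> orthonormal_basis slR2 ip B \<and>
                (\<forall>X\<in>B. geodesic_element ip X)"
  then obtain ip B where ip: "inner_product_on slR2 ip" and onb: "orthonormal_basis slR2 ip B"
    and geo: "\<forall>X\<in>B. geodesic_element ip X"
    by blast
  define S where "S = {b\<in>B. ip b tr_e1 \<noteq> 0 \<or> ip b tr_e2 \<noteq> 0}"
  have "finite S" "card S = CARD(3)"
    using card_translation_support[OF ip onb geo] unfolding S_def by (auto intro: card_ge_0_finite)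
  then obtain \<beta> :: "3 \<Rightarrow> real^3^3" where \<beta>: "bij_betw \<beta> UNIV S"
    using finite_same_card_bij[of "UNIV :: 3 set" S] by auto
  define coords :: "(real^3^3 \<Rightarrow> real) \<Rightarrow> real^3" where "coords f = (\<chi> k. f (\<beta> k))" for f
  have "coords (\<lambda>b. ip b Z) \<bullet> coords (\<lambda>b. b$i$j) = (\<Sum>b\<in>S. ip b Z * b$i$j)" for Z i j
    unfolding coords_def by (rule inner_vec_reindex_bij[OF \<beta>])
  then have dot: "coords (\<lambda>b. ip b Z) \<bullet> coords (\<lambda>b. b$i$j) = Z$i$j" if "Z \<in> {tr_e1, tr_e2}" for Z i j
    using that orthonormal_basis_entry_expansion[OF ip subspace_slR2 onb, of Z S] unfolding S_def
    by (auto simp: tr_e1_def tr_e2_def)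
  have "geodesic_element ip (\<beta> k)" "ip (\<beta> k) (\<beta> k) = 1"
    "ip (\<beta> k) tr_e1 \<noteq> 0 \<or> ip (\<beta> k) tr_e2 \<noteq> 0" for k
    using bij_betwE[OF \<beta>] geo onb unfolding S_def orthonormal_basis_def by auto
  note translation = geodesic_unit_translation_functional[OF ip this]
  have "\<exists>k. coords (\<lambda>b. b$1$1) $ k = 0 \<and> coords (\<lambda>b. b$1$2) $ k = 0 \<and> coords (\<lambda>b. b$2$1) $ k = 0"
    by (rule sl2_coordinates_vanish_somewhere[where c = "coords (\<lambda>b. ip b tr_e1)"
          and d = "coords (\<lambda>b. ip b tr_e2)" and x = "coords (\<lambda>b. b$1$3)" and y = "coords (\<lambda>b. b$2$3)"])
      (use dot[of tr_e1] dot[of tr_e2] translation(2,3) in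
        \<open>simp_all add: coords_def tr_e1_def tr_e2_def mult.commute\<close>)
  then show False
    using translation(4) by (auto simp: coords_def)
qed

end
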